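(* Consider the multi-site setting described in the context (with Assumption (A3) in force), and suppose Assumption (A5) holds. Then $$\sigma^2[\text{LATE}]=\frac{\sum_{s=1}^S w_s(\text{ITT}_s-\text{FS}_s\times\text{LATE})^2}{\overline{FS^2}}.$$
   Context: Setting. There are $S$ sites. For each site $s$, units have potential treatments $D_{s}(0),D_{s}(1)$ and reduced-form potential outcomes $Y^r_s(z)=Y_s(D_s(z))$ (generic within-site copies); $\text{FS}_s=E(D_s(1)-D_s(0))$, $\text{ITT}_s=E(Y^r_s(1)-Y^r_s(0))$. Non-random weights $w_s\ge0$ sum to one; $\text{FS}=\sum_sw_s\text{FS}_s$, $\text{ITT}=\sum_sw_s\text{ITT}_s$. Assumption (A3): for all $s$, $D_s(1)\ge D_s(0)$, and $\text{FS}>0$. For sites with $\text{FS}_s>0$, $\text{LATE}_s=\text{ITT}_s/\text{FS}_s$ (sites with $\text{FS}_s=0$ receive zero weight in all sums below); $\text{LATE}=\text{ITT}/\text{FS}=\sum_s\frac{w_s\text{FS}_s}{\text{FS}}\text{LATE}_s$. $\sigma^2[\text{LATE}]=\sum_{s=1}^S\frac{w_s\text{FS}_s}{\text{FS}}(\text{LATE}_s-\text{LATE})^2$; $\overline{FS^2}=\sum_sw_s\text{FS}_s^2$. $(\lambda_0,\lambda_1)$ are the coefficients of the weighted least-squares regression of $\text{FS}_s$ on $(1,\text{LATE}_s)$ with weights $\frac{w_s\text{FS}_s}{\text{FS}}$: $(\lambda_0,\lambda_1)=\arg\min_{l_0,l_1}\sum_s\frac{w_s\text{FS}_s}{\text{FS}}(\text{FS}_s-l_0-l_1\text{LATE}_s)^2$;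 $U_s=\text{FS}_s-(\lambda_0+\lambda_1\text{LATE}_s)$. Assumption (A5): $\sum_{s=1}^S\frac{w_s\text{FS}_s}{\text{FS}}U_s\text{LATE}_s^2=0$, and either $\lambda_1=0$ or $\sum_{s=1}^S\frac{w_s\text{FS}_s}{\text{FS}}(\text{LATE}_s-\text{LATE})^3=0$. *)

theory Defs
  imports "HOL-Probability.Probability"
begin

end

theory Submission
  imports Defs
begin

text \<open>
  Since the sites are monotone, a site with zero first stage has zero intention-to-treat effect,
  so \<open>ITT\<^sub>s = FS\<^sub>s LATE\<^sub>s\<close> for all sites. With the weights \<open>p\<^sub>s = w\<^sub>s FS\<^sub>s / FS\<close> the numerator
  of the claimed formula becomes \<open>FS \<Sum> p\<^sub>s FS\<^sub>s (LATE\<^sub>s - LATE)\<^sup>2\<close> and the denominator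
  \<open>FS \<Sum> p\<^sub>s FS\<^sub>s\<close>, so the claim says that \<open>FS\<^sub>s\<close> is \<open>p\<close>-uncorrelated with \<open>(LATE\<^sub>s - LATE)\<^sup>2\<close>.
  Write \<open>FS\<^sub>s = \<lambda>\<^sub>0 + \<lambda>\<^sub>1 LATE\<^sub>s + U\<^sub>s\<close>: the normal equations of the regression make \<open>U\<close>
  orthogonal to \<open>1\<close> and \<open>LATE\<^sub>s\<close>, (A5) makes it orthogonal to \<open>LATE\<^sub>s\<^sup>2\<close>, and the
  \<open>\<lambda>\<^sub>1\<close>-term contributes \<open>\<lambda>\<^sub>1\<close> times the third central moment of \<open>LATE\<^sub>s\<close>, which (A5) kills.
\<close>

lemma first_stage_nonneg:
  fixes D0 D1 :: "'a \<Rightarrow> real"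
  assumes "\<And>\<omega>. \<omega> \<in> space M \<Longrightarrow> D0 \<omega> \<le> D1 \<omega>"
  shows "0 \<le> (\<integral>\<omega>. D1 \<omega> - D0 \<omega> \<partial>M)"
  using assms by (intro integral_nonneg_AE AE_I2) auto

lemma reduced_form_eq_0_if_first_stage_eq_0:
  fixes D0 D1 :: "'a \<Rightarrow> real" and Y :: "'a \<Rightarrow> real \<Rightarrow> real"
  assumes "integrable M D0" and "integrable M D1"
    and "(\<lambda>\<omega>. Y \<omega> (D0 \<omega>)) \<in> borel_measurable M"
    and "(\<lambda>\<omega>. Y \<omega> (D1 \<omega>)) \<in> borel_measurable M"
    and mono: "\<And>\<omega>. \<omega> \<in> space M \<Longrightarrow> D0 \<omega> \<le> D1 \<omega>"
    and first_stage: "(\<integral>\<omega>. D1 \<omega> - D0 \<omega> \<partial>M) = 0"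
  shows "(\<integral>\<omega>. Y \<omega> (D1 \<omega>) - Y \<omega> (D0 \<omega>) \<partial>M) = 0"
proof -
  have "integrable M (\<lambda>\<omega>. D1 \<omega> - D0 \<omega>)"
    using assms(1,2) by auto
  then have "AE \<omega> in M. D1 \<omega> - D0 \<omega> = 0"
    using first_stage mono by (subst (asm) integral_nonneg_eq_0_iff_AE) auto
  then have "AE \<omega> in M. Y \<omega> (D1 \<omega>) - Y \<omega> (D0 \<omega>) = 0"
    by eventually_elim simp
  then have "(\<integral>\<omega>. Y \<omega> (D1 \<omega>) - Y \<omega> (D0 \<omega>) \<partial>M) = (\<integral>\<omega>. 0 \<partial>M)"
    using assms(3,4) by (intro integral_cong_AE) auto
  then show ?thesis
    by simp
qed

lemma linear_coeff_eq_0_if_quadratic_nonneg: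
  fixes a b :: real
  assumes nonneg: "\<And>t. 0 \<le> t\<^sup>2 * b - 2 * t * a" and "0 \<le> b"
  shows "a = 0"
proof (cases "b = 0")
  case True
  with nonneg[of a] show ?thesis
    by (auto simp: mult_le_0_iff)
next
  case False
  with \<open>0 \<le> b\<close> have "0 < b"
    by simp
  have "0 \<le> (a / b)\<^sup>2 * b - 2 * (a / b) * a"
    by (rule nonneg)
  also have "\<dots> = - (a\<^sup>2 / b)"
    using \<open>0 < b\<close> by (simp add: field_simps power2_eq_square)
  finally have "a\<^sup>2 / b \<le> 0"
    by simp
  with \<open>0 < b\<close> show ?thesis
    by (simp add: divide_le_0_iff)
qed

lemma weighted_residual_orthogonal:
  fixes p r z :: "'i \<Rightarrow> real"
  assumes p_nonneg: "\<And>i. i \<in> A \<Longrightarrow> 0 \<le> p i"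
    and minimal: "\<And>t. (\<Sum>i\<in>A. p i * (r i)\<^sup>2) \<le> (\<Sum>i\<in>A. p i * (r i - t * z i)\<^sup>2)"
  shows "(\<Sum>i\<in>A. p i * r i * z i) = 0"
proof (rule linear_coeff_eq_0_if_quadratic_nonneg)
  fix t
  have "(\<Sum>i\<in>A. p i * (r i - t * z i)\<^sup>2)
      = (\<Sum>i\<in>A. p i * (r i)\<^sup>2) + t\<^sup>2 * (\<Sum>i\<in>A. p i * (z i)\<^sup>2) - 2 * t * (\<Sum>i\<in>A. p i * r i * z i)"
    by (simp add: sum_distrib_left sum_subtractf[symmetric] sum.distrib[symmetric]
        algebra_simps power2_eq_square)
  then show "0 \<le> t\<^sup>2 * (\<Sum>i\<in>A. p i * (z i)\<^sup>2) - 2 * t * (\<Sum>i\<in>A. p i * r i * z i)"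
    using minimal[of t] by simp
  show "0 \<le> (\<Sum>i\<in>A. p i * (z i)\<^sup>2)"
    using p_nonneg by (intro sum_nonneg) auto
qed

lemma weighted_least_squares_normal_equations:
  fixes p x y :: "'i \<Rightarrow> real"
  assumes p_nonneg: "\<And>i. i \<in> A \<Longrightarrow> 0 \<le> p i"
    and minimal: "\<And>a b. (\<Sum>i\<in>A. p i * (y i - a\<^sub>0 - b\<^sub>0 * x i)\<^sup>2)
                          \<le> (\<Sum>i\<in>A. p i * (y i - a - b * x i)\<^sup>2)"
  shows "(\<Sum>i\<in>A. p i * (y i - a\<^sub>0 - b\<^sub>0 * x i)) = 0"
    and "(\<Sum>i\<in>A. p i * (y i - a\<^sub>0 - b\<^sub>0 * x i) * x i) = 0"
proof -
  have "(\<Sum>i\<in>A. p i * (y i - a\<^sub>0 - b\<^sub>0 * x i) * 1) = 0"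
  proof (rule weighted_residual_orthogonal)
    show "(\<Sum>i\<in>A. p i * (y i - a\<^sub>0 - b\<^sub>0 * x i)\<^sup>2)
        \<le> (\<Sum>i\<in>A. p i * (y i - a\<^sub>0 - b\<^sub>0 * x i - t * 1)\<^sup>2)" for t
      using minimal[of "a\<^sub>0 + t" b\<^sub>0] by (simp add: algebra_simps)
  qed (rule p_nonneg)
  then show "(\<Sum>i\<in>A. p i * (y i - a\<^sub>0 - b\<^sub>0 * x i)) = 0"
    by simp
  show "(\<Sum>i\<in>A. p i * (y i - a\<^sub>0 - b\<^sub>0 * x i) * x i) = 0"
  proof (rule weighted_residual_orthogonal)
    show "(\<Sum>i\<in>A. p i * (y i - a\<^sub>0 - b\<^sub>0 * x i)\<^sup>2)
        \<le> (\<Sum>i\<in>A. p i * (y i - a\<^sub>0 - b\<^sub>0 * x i - t * x i)\<^sup>2)" for t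
      using minimal[of a\<^sub>0 "b\<^sub>0 + t"] by (simp add: algebra_simps)
  qed (rule p_nonneg)
qed

lemma weighted_sum_mult_centered_square:
  fixes p x y u :: "'i \<Rightarrow> real"
  assumes p_sum: "(\<Sum>i\<in>A. p i) = 1"
    and m_def: "m = (\<Sum>i\<in>A. p i * x i)"
    and y_def: "\<And>i. y i = a + b * x i + u i"
    and u_orth_1: "(\<Sum>i\<in>A. p i * u i) = 0"
    and u_orth_x: "(\<Sum>i\<in>A. p i * u i * x i) = 0"
    and u_orth_x2: "(\<Sum>i\<in>A. p i * u i * (x i)\<^sup>2) = 0"
    and third_moment: "b * (\<Sum>i\<in>A. p i * (x i - m) ^ 3) = 0"
  shows "(\<Sum>i\<in>A. p i * y i * (x i - m)\<^sup>2) = (\<Sum>i\<in>A. p i * y i) * (\<Sum>i\<in>A. p i * (x i - m)\<^sup>2)"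
proof -
  define V where "V = (\<Sum>i\<in>A. p i * (x i - m)\<^sup>2)"
  have "(\<Sum>i\<in>A. p i * y i) = a * (\<Sum>i\<in>A. p i) + b * m + (\<Sum>i\<in>A. p i * u i)"
    unfolding m_def y_def by (simp add: sum_distrib_left sum.distrib algebra_simps)
  then have mean_y: "(\<Sum>i\<in>A. p i * y i) = a + b * m"
    using p_sum u_orth_1 by simp
  have "(\<Sum>i\<in>A. p i * y i * (x i - m)\<^sup>2)
      = (a + b * m) * V + b * (\<Sum>i\<in>A. p i * (x i - m) ^ 3)
        + (\<Sum>i\<in>A. p i * u i * (x i)\<^sup>2) - 2 * m * (\<Sum>i\<in>A. p i * u i * x i)
        + m\<^sup>2 * (\<Sum>i\<in>A. p i * u i)"
    unfolding V_def y_def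
    by (simp add: sum_distrib_left sum_subtractf[symmetric] sum.distrib[symmetric]
        algebra_simps power2_eq_square power3_eq_cube)
  also have "\<dots> = (a + b * m) * V"
    using third_moment u_orth_1 u_orth_x u_orth_x2 by simp
  finally show ?thesis
    unfolding V_def mean_y .
qed

lemma sum_mult_square_pos:
  fixes w f :: "'i \<Rightarrow> real"
  assumes "finite A" and w_nonneg: "\<And>i. i \<in> A \<Longrightarrow> 0 \<le> w i"
    and "(\<Sum>i\<in>A. w i * f i) \<noteq> 0"
  shows "0 < (\<Sum>i\<in>A. w i * (f i)\<^sup>2)"
proof -
  obtain j where "j \<in> A" and "w j * f j \<noteq> 0"
    using assms(3) by (meson sum.neutral)
  with w_nonneg have "0 < w j * (f j)\<^sup>2"
    by (simp add: less_le)
  with \<open>finite A\<close> \<open>j \<in> A\<close> show ?thesis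
    by (rule sum_pos2) (simp add: w_nonneg)
qed

theorem theorem4:
  fixes S :: nat
    and M :: "nat \<Rightarrow> 'a measure"
    and D0 D1 :: "nat \<Rightarrow> 'a \<Rightarrow> real"
    and Y :: "nat \<Rightarrow> 'a \<Rightarrow> real \<Rightarrow> real"
    and w :: "nat \<Rightarrow> real"
    and l0 l1 :: real
    and FS_s ITT_s LATE_s U p :: "nat \<Rightarrow> real"
    and FS ITT LATE var_LATE FS2 :: real
  assumes prob: "\<And>s. s \<in> {1..S} \<Longrightarrow> prob_space (M s)"
    and int_D0: "\<And>s. s \<in> {1..S} \<Longrightarrow> integrable (M s) (D0 s)"
    and int_D1: "\<And>s. s \<in> {1..S} \<Longrightarrow> integrable (M s) (D1 s)"
    and int_Y0: "\<And>s. s \<in> {1..S} \<Longrightarrow> integrable (M s) (\<lambda>\<omega>. Y s \<omega> (D0 s \<omega>))"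
    and int_Y1: "\<And>s. s \<in> {1..S} \<Longrightarrow> integrable (M s) (\<lambda>\<omega>. Y s \<omega> (D1 s \<omega>))"
    and w_nonneg: "\<And>s. s \<in> {1..S} \<Longrightarrow> w s \<ge> 0"
    and w_sum: "(\<Sum>s\<in>{1..S}. w s) = 1"
    and FS_s_def: "\<And>s. FS_s s = (\<integral>\<omega>. D1 s \<omega> - D0 s \<omega> \<partial>M s)"
    and ITT_s_def: "\<And>s. ITT_s s = (\<integral>\<omega>. Y s \<omega> (D1 s \<omega>) - Y s \<omega> (D0 s \<omega>) \<partial>M s)"
    and FS_def: "FS = (\<Sum>s\<in>{1..S}. w s * FS_s s)"
    and ITT_def: "ITT = (\<Sum>s\<in>{1..S}. w s * ITT_s s)"
    and A3_mono: "\<And>s \<omega>. s \<in> {1..S} \<Longrightarrow> \<omega> \<in> space (M s) \<Longrightarrow> D1 s \<omega> \<ge> D0 s \<omega>"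
    and A3_pos: "FS > 0"
    and LATE_s_def: "\<And>s. LATE_s s = ITT_s s / FS_s s"
    and LATE_def: "LATE = ITT / FS"
    and p_def: "\<And>s. p s = w s * FS_s s / FS"
    and var_def: "var_LATE = (\<Sum>s\<in>{1..S}. p s * (LATE_s s - LATE)^2)"
    and FS2_def: "FS2 = (\<Sum>s\<in>{1..S}. w s * (FS_s s)^2)"
    and wls: "\<And>a b. (\<Sum>s\<in>{1..S}. p s * (FS_s s - l0 - l1 * LATE_s s)^2)
                  \<le> (\<Sum>s\<in>{1..S}. p s * (FS_s s - a - b * LATE_s s)^2)"
    and U_def: "\<And>s. U s = FS_s s - (l0 + l1 * LATE_s s)"
    and A5_1: "(\<Sum>s\<in>{1..S}. p s * U s * (LATE_s s)^2) = 0"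
    and A5_2: "l1 = 0 \<or> (\<Sum>s\<in>{1..S}. p s * (LATE_s s - LATE)^3) = 0"
  shows "var_LATE = (\<Sum>s\<in>{1..S}. w s * (ITT_s s - FS_s s * LATE)^2) / FS2"
proof -
  let ?I = "{1..S}"
  \<comment> \<open>For \<open>FS_s s = 0\<close> this needs \<open>ITT_s s = 0\<close>, as then \<open>LATE_s s = ITT_s s / 0 = 0\<close>.\<close>
  have ITT_eq: "ITT_s s = FS_s s * LATE_s s" if "s \<in> ?I" for s
    using reduced_form_eq_0_if_first_stage_eq_0[of "M s" "D0 s" "D1 s" "Y s"]
      int_D0 int_D1 int_Y0 int_Y1 A3_mono that
    by (cases "FS_s s = 0") (auto simp: FS_s_def ITT_s_def LATE_s_def)
  have p_nonneg: "0 \<le> p s" if "s \<in> ?I" for s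
    using first_stage_nonneg[of "M s" "D0 s" "D1 s"] A3_mono w_nonneg A3_pos that
    by (simp add: p_def FS_s_def)
  have p_sum: "(\<Sum>s\<in>?I. p s) = 1"
    using A3_pos by (simp add: p_def FS_def sum_divide_distrib[symmetric])
  have LATE_mean: "LATE = (\<Sum>s\<in>?I. p s * LATE_s s)"
    unfolding LATE_def ITT_def sum_divide_distrib by (intro sum.cong) (auto simp: p_def ITT_eq)
  have U_orth: "(\<Sum>s\<in>?I. p s * U s) = 0" "(\<Sum>s\<in>?I. p s * U s * LATE_s s) = 0"
    using weighted_least_squares_normal_equations[OF p_nonneg wls] by (simp_all add: U_def diff_diff_add)
  have centered: "(\<Sum>s\<in>?I. p s * FS_s s * (LATE_s s - LATE)\<^sup>2) = (\<Sum>s\<in>?I. p s * FS_s s) * var_LATE"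
    unfolding var_def
    using U_orth A5_1 A5_2
    by (intro weighted_sum_mult_centered_square[OF p_sum LATE_mean, where u = U]) (auto simp: U_def)
  have numerator: "(\<Sum>s\<in>?I. w s * (ITT_s s - FS_s s * LATE)\<^sup>2)
      = FS * (\<Sum>s\<in>?I. p s * FS_s s * (LATE_s s - LATE)\<^sup>2)"
    unfolding sum_distrib_left using A3_pos
    by (intro sum.cong) (auto simp: ITT_eq p_def power2_eq_square field_simps)
  have denominator: "FS2 = FS * (\<Sum>s\<in>?I. p s * FS_s s)"
    unfolding FS2_def sum_distrib_left using A3_pos
    by (intro sum.cong) (auto simp: p_def power2_eq_square)
  have "0 < FS2"
    unfolding FS2_def
    by (rule sum_mult_square_pos) (use w_nonneg A3_pos FS_def in auto)
  moreover have "(\<Sum>s\<in>?I. w s * (ITT_s s - FS_s s * LATE)\<^sup>2) = FS2 * var_LATE"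
    unfolding numerator centered denominator by (simp only: mult.assoc)
  ultimately show ?thesis
    by simp
qed

end
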